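(* Let $A,C$ be logically independent events and consider assessments with $P(C|A)=x>0$. Then $(C|A)\wedge\bar C=x\,\bar A\bar C$, and the iterated conditional $\bar A\,|\,\big((C|A)\wedge\bar C\big)$, defined as $\bar A\wedge(C|A)\wedge\bar C+\mu\,(1-(C|A)\wedge\bar C)$ with $\mu$ its prevision, equals $1$ (i.e. its only coherent prevision is $\mu=1$ and it takes value $1$ in every outcome). *)

theory Defs
  imports Complex_Main
begin

text \<open>Finite-outcome (de Finetti / Gilio-Sanfilippo) setting: outcomes are the elements
of a set Omega, events are subsets of Omega, random quantities are real functions on outcomes.\<close>

definition ind :: "'w set \<Rightarrow> 'w \<Rightarrow> real" where
  "ind E w = (if w \<in> E then 1 else 0)"

definition log_indep :: "'w set \<Rightarrow> 'w set \<Rightarrow> 'w set \<Rightarrow> bool" where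
  "log_indep Om A C \<longleftrightarrow>
     (A \<inter> C \<noteq> {}) \<and> (A \<inter> (Om - C) \<noteq> {}) \<and>
     ((Om - A) \<inter> C \<noteq> {}) \<and> ((Om - A) \<inter> (Om - C) \<noteq> {})"

text \<open>Conditional event E|H with prevision x: 1 if EH true, 0 if (not E)H true, x if H false.\<close>
definition cond_event :: "'w set \<Rightarrow> 'w set \<Rightarrow> real \<Rightarrow> 'w \<Rightarrow> real" where
  "cond_event E H x w = (if w \<in> H then (if w \<in> E then 1 else 0) else x)"

text \<open>Conjunction (E|H) and (F|K) (Gilio-Sanfilippo), with x = P(E|H), y = P(F|K),
  z = prevision of the conjunction: 1 if EHFK true, 0 if (not E)H or (not F)K true,
  x if H false and FK true, y if EH true and K false, z if H and K both false.\<close>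
definition conj_ce ::
  "'w set \<Rightarrow> 'w set \<Rightarrow> real \<Rightarrow> 'w set \<Rightarrow> 'w set \<Rightarrow> real \<Rightarrow> real \<Rightarrow> 'w \<Rightarrow> real" where
  "conj_ce E H x F K y z w =
     (if (w \<in> H \<and> w \<notin> E) \<or> (w \<in> K \<and> w \<notin> F) then 0
      else if w \<in> H \<and> w \<in> K then 1
      else if w \<in> K then x
      else if w \<in> H then y
      else z)"

text \<open>Iterated conditional E | Z, for an event E and a random quantity Z, with prevision mu:
  (E and Z) + mu (1 - Z), where the conjunction of the (unconditional) event E with Z is E*Z.\<close>
definition iter_cond :: "'w set \<Rightarrow> ('w \<Rightarrow> real) \<Rightarrow> real \<Rightarrow> 'w \<Rightarrow> real" where
  "iter_cond E Z mu w = ind E w * Z w + mu * (1 - Z w)"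

text \<open>Coherence of the prevision mu of the iterated conditional E | Z (betting scheme):
  for every stake s, the random gain s (E|Z - mu) is not uniformly negative over the outcomes
  in which the bet is not called off, i.e. the outcomes where Z is nonzero.\<close>
definition coherent_iter :: "'w set \<Rightarrow> 'w set \<Rightarrow> ('w \<Rightarrow> real) \<Rightarrow> real \<Rightarrow> bool" where
  "coherent_iter Om E Z mu \<longleftrightarrow>
     (\<forall>s::real. \<not> (\<forall>w \<in> Om. Z w \<noteq> 0 \<longrightarrow> s * (iter_cond E Z mu w - mu) < 0))"

end

theory Submission
  imports Defs
begin

text \<open>Given C|A with P(C|A) = x, the conjunction (C|A) \<and> \<not>C vanishes unless both A and C are
  false, where it equals x; so it is a nonnegative random quantity supported inside \<not>A. For any
  event E containing the support of a nonnegative Z, the iterated conditional E|Z equals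
  \<mu> + Z(1 - \<mu>); a bet on it with stake -(1 - \<mu>) therefore has gain -Z(1 - \<mu>)^2, which is
  negative wherever the bet is not called off unless \<mu> = 1.\<close>

lemma conj_ce_cond_event_negation:
  assumes "w \<in> Om"
  shows "conj_ce C A x (Om - C) Om y z w = x * ind (Om - A) w * ind (Om - C) w"
  using assms by (auto simp: conj_ce_def ind_def)

lemma iter_cond_eq_on_support:
  assumes "Z w \<noteq> 0 \<Longrightarrow> w \<in> E"
  shows "iter_cond E Z mu w = mu + Z w * (1 - mu)"
  using assms by (cases "w \<in> E") (auto simp: iter_cond_def ind_def algebra_simps)

lemma coherent_iter_iff_eq_1:
  assumes nonneg: "\<forall>w \<in> Om. 0 \<le> Z w"
    and support: "\<forall>w \<in> Om. Z w \<noteq> 0 \<longrightarrow> w \<in> E"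
    and nonzero: "\<exists>w \<in> Om. Z w \<noteq> 0"
  shows "coherent_iter Om E Z mu \<longleftrightarrow> mu = 1"
proof -
  have gain: "iter_cond E Z mu w - mu = Z w * (1 - mu)" if "w \<in> Om" for w
    using iter_cond_eq_on_support[of Z w E mu] support that by simp
  show ?thesis
  proof
    assume coherent: "coherent_iter Om E Z mu"
    show "mu = 1"
    proof (rule ccontr)
      assume "mu \<noteq> 1"
      then have "0 < (1 - mu)\<^sup>2" by simp
      have "- (1 - mu) * (iter_cond E Z mu w - mu) < 0" if "w \<in> Om" "Z w \<noteq> 0" for w
      proof -
        have "0 < Z w" using nonneg that by force
        with \<open>0 < (1 - mu)\<^sup>2\<close> have "0 < Z w * (1 - mu)\<^sup>2" by simp
        moreover have "- (1 - mu) * (iter_cond E Z mu w - mu) = - (Z w * (1 - mu)\<^sup>2)"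
          unfolding gain[OF \<open>w \<in> Om\<close>] by (simp add: power2_eq_square algebra_simps)
        ultimately show ?thesis by linarith
      qed
      with coherent show False unfolding coherent_iter_def by (metis (no_types, lifting))
    qed
  next
    assume "mu = 1"
    obtain w where "w \<in> Om" "Z w \<noteq> 0" using nonzero by blast
    moreover have "s * (iter_cond E Z mu w - mu) = 0" for s
      using gain[OF \<open>w \<in> Om\<close>] \<open>mu = 1\<close> by simp
    ultimately show "coherent_iter Om E Z mu"
      unfolding coherent_iter_def by (metis less_irrefl)
  qed
qed

theorem mainTheorem9:
  fixes Om A C :: "'w set" and x y z :: real
  assumes "A \<subseteq> Om" and "C \<subseteq> Om"
    and "log_indep Om A C"
    and "0 < x" and "x \<le> 1"
  defines "Z \<equiv> conj_ce C A x (Om - C) Om y z"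
  shows "(\<forall>w \<in> Om. Z w = x * ind (Om - A) w * ind (Om - C) w)
         \<and> (\<forall>mu. coherent_iter Om (Om - A) Z mu \<longleftrightarrow> mu = 1)
         \<and> (\<forall>w \<in> Om. iter_cond (Om - A) Z 1 w = 1)"
proof -
  have Z_eq: "\<forall>w \<in> Om. Z w = x * ind (Om - A) w * ind (Om - C) w"
    by (simp add: Z_def conj_ce_cond_event_negation)
  have nonneg: "\<forall>w \<in> Om. 0 \<le> Z w"
    using Z_eq \<open>0 < x\<close> by (simp add: ind_def)
  have support: "\<forall>w \<in> Om. Z w \<noteq> 0 \<longrightarrow> w \<in> Om - A"
    using Z_eq by (simp add: ind_def)
  obtain w0 where "w0 \<in> Om - A" "w0 \<in> Om - C"
    using \<open>log_indep Om A C\<close> unfolding log_indep_def by blast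
  then have "\<exists>w \<in> Om. Z w \<noteq> 0"
    using Z_eq \<open>0 < x\<close> by (auto simp: ind_def)
  then have "\<forall>mu. coherent_iter Om (Om - A) Z mu \<longleftrightarrow> mu = 1"
    using coherent_iter_iff_eq_1[OF nonneg support] by simp
  moreover have "\<forall>w \<in> Om. iter_cond (Om - A) Z 1 w = 1"
  proof
    fix w assume "w \<in> Om"
    with support have "Z w \<noteq> 0 \<Longrightarrow> w \<in> Om - A" by blast
    from iter_cond_eq_on_support[OF this] show "iter_cond (Om - A) Z 1 w = 1" by simp
  qed
  ultimately show ?thesis using Z_eq by blast
qed

end
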